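(* Let $S$ be a semigroup and $p$ an ultrafilter on $S$. If $p$ is a regular strongly productive ultrafilter, then $p$ is idempotent.
   Context: For a sequence $\vec{x}=(x_n)_{n\in\omega}$ in $S$, $\mathrm{FP}(\vec{x})$ is the set of all products $\prod_{i\in a}x_i$ (in increasing order of indices), $a$ ranging over finite nonempty subsets of $\omega$, and $\mathrm{FP}_k(\vec{x})=\mathrm{FP}((x_{n+k})_{n\in\omega})$. An ultrafilter $p$ on $S$ is strongly productive if every $A\in p$ contains some $\mathrm{FP}(\vec{x})$ which belongs to $p$. A nonprincipal strongly productive ultrafilter $p$ is regular if there is $B\in p$ such that for every sequence $\vec{x}$ with $\mathrm{FP}(\vec{x})\subseteq B$, the set $x_0\mathrm{FP}_1(\vec{x})$ does not belong to $p$. An ultrafilter $p$ is idempotent if for every $A\in p$ the set $\{x\in S: x^{-1}A\in p\}$ belongs to $p$, where $x^{-1}A=\{y\in S: xy\in A\}$. *)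

theory Defs
  imports Main
begin

definition is_ultrafilter :: "'a set set \<Rightarrow> bool" where
  "is_ultrafilter p \<longleftrightarrow>
     UNIV \<in> p \<and> {} \<notin> p \<and>
     (\<forall>A B. A \<in> p \<longrightarrow> A \<subseteq> B \<longrightarrow> B \<in> p) \<and>
     (\<forall>A B. A \<in> p \<longrightarrow> B \<in> p \<longrightarrow> A \<inter> B \<in> p) \<and>
     (\<forall>A. A \<in> p \<or> - A \<in> p)"

definition nonprincipal :: "'a set set \<Rightarrow> bool" where
  "nonprincipal p \<longleftrightarrow> (\<forall>x. {x} \<notin> p)"

fun lprod :: "(nat \<Rightarrow> 'a::semigroup_mult) \<Rightarrow> nat list \<Rightarrow> 'a" where
  "lprod x [i] = x i"
| "lprod x (i # j # is) = x i * lprod x (j # is)"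

definition FP :: "(nat \<Rightarrow> 'a::semigroup_mult) \<Rightarrow> 'a set" where
  "FP x = {lprod x (sorted_list_of_set a) | a. finite a \<and> a \<noteq> {}}"

definition FPk :: "nat \<Rightarrow> (nat \<Rightarrow> 'a::semigroup_mult) \<Rightarrow> 'a set" where
  "FPk k x = FP (\<lambda>n. x (n + k))"

definition strongly_productive :: "'a::semigroup_mult set set \<Rightarrow> bool" where
  "strongly_productive p \<longleftrightarrow> (\<forall>A\<in>p. \<exists>x. FP x \<subseteq> A \<and> FP x \<in> p)"

definition regular_sp :: "'a::semigroup_mult set set \<Rightarrow> bool" where
  "regular_sp p \<longleftrightarrow> nonprincipal p \<and> strongly_productive p \<and>
     (\<exists>B\<in>p. \<forall>x. FP x \<subseteq> B \<longrightarrow> ((\<lambda>y. x 0 * y) ` FPk 1 x) \<notin> p)"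

definition idempotent_uf :: "'a::semigroup_mult set set \<Rightarrow> bool" where
  "idempotent_uf p \<longleftrightarrow> (\<forall>A\<in>p. {s. {t. s * t \<in> A} \<in> p} \<in> p)"

end

theory Submission
  imports Defs
begin

(* Given A in p, regularity and strong productivity give FP(x) in p with FP(x) contained
   in both A and the regularity witness B. Every tail FP_k(x) is then in p: FP_k(x) splits
   into {x_k}, FP_(k+1)(x) and x_k FP_(k+1)(x), the first is excluded by nonprincipality and
   the last by regularity, since FP of the tail sequence again lies in B. For y in FP(x), the
   products y FP_n(x) stay in FP(x) once n exceeds the indices used by y, so y^-1 A contains
   a tail and is in p; hence FP(x) is contained in {y. y^-1 A in p}. *)


lemma lprod_append:
  "xs \<noteq> [] \<Longrightarrow> ys \<noteq> [] \<Longrightarrow> lprod x (xs @ ys) = lprod x xs * lprod x ys"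
proof (induction x xs rule: lprod.induct)
  case (1 x i)
  then show ?case by (cases ys) auto
qed (simp_all add: mult.assoc)

lemma lprod_comp: "xs \<noteq> [] \<Longrightarrow> lprod (x \<circ> f) xs = lprod x (map f xs)"
  by (induction x xs rule: lprod.induct) auto

lemma sorted_list_of_set_image_strict_mono:
  fixes f :: "'a::linorder \<Rightarrow> 'b::linorder"
  assumes "strict_mono f" "finite A"
  shows "sorted_list_of_set (f ` A) = map f (sorted_list_of_set A)"
  using assms
  by (intro sorted_distinct_set_unique)
     (auto simp: sorted_map strict_mono_less_eq distinct_map strict_mono_imp_inj_on)

lemma sorted_list_of_set_Un_less:
  fixes A B :: "'a::linorder set"
  assumes "finite A" "finite B" "\<forall>i\<in>A. \<forall>j\<in>B. i < j"
  shows "sorted_list_of_set (A \<union> B) = sorted_list_of_set A @ sorted_list_of_set B"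
  using assms
  by (intro sorted_distinct_set_unique) (auto simp: sorted_append less_imp_le)

lemma lprod_sorted_list_of_set_Un:
  assumes "finite a" "a \<noteq> {}" "finite b" "b \<noteq> {}" "\<forall>i\<in>a. \<forall>j\<in>b. i < j"
  shows "lprod x (sorted_list_of_set (a \<union> b))
           = lprod x (sorted_list_of_set a) * lprod x (sorted_list_of_set b)"
  using assms by (simp add: sorted_list_of_set_Un_less lprod_append)

lemma lprod_shift_sorted_list_of_set:
  "finite b \<Longrightarrow> b \<noteq> {} \<Longrightarrow>
     lprod (\<lambda>n. x (n + k)) (sorted_list_of_set b) = lprod x (sorted_list_of_set ((\<lambda>n. n + k) ` b))"
  using lprod_comp[of "sorted_list_of_set b" x "\<lambda>n. n + k"]
  by (simp add: comp_def sorted_list_of_set_image_strict_mono strict_mono_def)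

lemma finite_subsets_atLeast_eq_shift:
  "{a. finite a \<and> a \<noteq> {} \<and> a \<subseteq> {k::nat..}} = (\<lambda>b. (\<lambda>n. n + k) ` b) ` {b. finite b \<and> b \<noteq> {}}"
proof (intro equalityI subsetI)
  fix a assume "a \<in> {a. finite a \<and> a \<noteq> {} \<and> a \<subseteq> {k..}}"
  then have "a = (\<lambda>n. n + k) ` ((\<lambda>n. n - k) ` a)" "finite ((\<lambda>n. n - k) ` a)" "(\<lambda>n. n - k) ` a \<noteq> {}"
    by (force simp: image_image)+
  then show "a \<in> (\<lambda>b. (\<lambda>n. n + k) ` b) ` {b. finite b \<and> b \<noteq> {}}"
    by blast
qed auto

lemma FPk_eq:
  "FPk k x = {lprod x (sorted_list_of_set a) | a. finite a \<and> a \<noteq> {} \<and> a \<subseteq> {k..}}"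
proof -
  have "FPk k x = (\<lambda>b. lprod (\<lambda>n. x (n + k)) (sorted_list_of_set b)) ` {b. finite b \<and> b \<noteq> {}}"
    unfolding FPk_def FP_def by blast
  also have "\<dots> = (\<lambda>a. lprod x (sorted_list_of_set a)) ` (\<lambda>b. (\<lambda>n. n + k) ` b) ` {b. finite b \<and> b \<noteq> {}}"
    unfolding image_image by (rule image_cong) (simp_all add: lprod_shift_sorted_list_of_set)
  also have "\<dots> = {lprod x (sorted_list_of_set a) | a. finite a \<and> a \<noteq> {} \<and> a \<subseteq> {k..}}"
    unfolding finite_subsets_atLeast_eq_shift[symmetric] by blast
  finally show ?thesis .
qed

lemma FPk_subset_FP: "FPk k x \<subseteq> FP x"
  unfolding FPk_eq FP_def by blast

lemma FPk_shift: "FPk 1 (\<lambda>n. x (n + k)) = FPk (Suc k) x"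
  by (simp add: FPk_def ac_simps)

lemma FP_subset_Un: "FP x \<subseteq> {x 0} \<union> FPk 1 x \<union> (\<lambda>w. x 0 * w) ` FPk 1 x"
proof
  fix y assume "y \<in> FP x"
  then obtain a where a: "finite a" "a \<noteq> {}" "y = lprod x (sorted_list_of_set a)"
    unfolding FP_def by blast
  consider "0 \<notin> a" | "a = {0}" | "0 \<in> a" "a - {0} \<noteq> {}"
    by blast
  then show "y \<in> {x 0} \<union> FPk 1 x \<union> (\<lambda>w. x 0 * w) ` FPk 1 x"
  proof cases
    case 1
    then have "a \<subseteq> {1..}" by (auto simp: Suc_le_eq intro!: gr0I)
    then show ?thesis using a by (auto simp: FPk_eq)
  next
    case 2
    then show ?thesis using a by simp
  next
    case 3
    let ?b = "a - {0}"
    have b: "finite ?b" "?b \<subseteq> {1..}" using a(1) by (auto simp: Suc_le_eq)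
    have "a = {0} \<union> ?b" using 3 by blast
    then have "y = x 0 * lprod x (sorted_list_of_set ?b)"
      using a b 3 lprod_sorted_list_of_set_Un[of "{0}" ?b x] by auto
    moreover have "lprod x (sorted_list_of_set ?b) \<in> FPk 1 x"
      using b 3 by (auto simp: FPk_eq)
    ultimately show ?thesis by blast
  qed
qed

lemma FP_mult_FPk_subset:
  assumes "y \<in> FP x"
  obtains n where "(\<lambda>w. y * w) ` FPk n x \<subseteq> FP x"
proof -
  obtain a where a: "finite a" "a \<noteq> {}" "y = lprod x (sorted_list_of_set a)"
    using assms unfolding FP_def by blast
  have "(\<lambda>w. y * w) ` FPk (Suc (Max a)) x \<subseteq> FP x"
  proof
    fix z assume "z \<in> (\<lambda>w. y * w) ` FPk (Suc (Max a)) x"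
    then obtain b where b: "finite b" "b \<noteq> {}" "b \<subseteq> {Suc (Max a)..}"
      and z: "z = y * lprod x (sorted_list_of_set b)"
      unfolding FPk_eq by blast
    have "\<forall>i\<in>a. \<forall>j\<in>b. i < j"
      using Max_ge[OF a(1)] b(3) by (fastforce simp: Suc_le_eq)
    then have "z = lprod x (sorted_list_of_set (a \<union> b))"
      using a b z by (simp add: lprod_sorted_list_of_set_Un)
    then show "z \<in> FP x"
      using a b unfolding FP_def by blast
  qed
  then show ?thesis by (rule that)
qed

lemma ultrafilter_mono: "is_ultrafilter p \<Longrightarrow> A \<in> p \<Longrightarrow> A \<subseteq> B \<Longrightarrow> B \<in> p"
  unfolding is_ultrafilter_def by blast

lemma ultrafilter_Int: "is_ultrafilter p \<Longrightarrow> A \<in> p \<Longrightarrow> B \<in> p \<Longrightarrow> A \<inter> B \<in> p"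
  unfolding is_ultrafilter_def by blast

lemma ultrafilter_UnD:
  assumes "is_ultrafilter p" "A \<union> B \<in> p"
  shows "A \<in> p \<or> B \<in> p"
proof (rule ccontr)
  assume "\<not> (A \<in> p \<or> B \<in> p)"
  then have "(A \<union> B) \<inter> - A \<inter> - B \<in> p"
    using assms unfolding is_ultrafilter_def by meson
  then show False
    using assms(1) unfolding is_ultrafilter_def by (simp add: Int_Un_distrib2)
qed

lemma FPk_mem_ultrafilter:
  assumes p: "is_ultrafilter p" "nonprincipal p"
    and x: "FP x \<in> p" "FP x \<subseteq> B"
    and B: "\<And>y. FP y \<subseteq> B \<Longrightarrow> (\<lambda>w. y 0 * w) ` FPk 1 y \<notin> p"
  shows "FPk k x \<in> p"
proof (induction k)
  case 0
  then show ?case using x(1) by (simp add: FPk_def)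
next
  case (Suc k)
  define y where "y = (\<lambda>n. x (n + k))"
  have "FP y \<subseteq> B"
    using x(2) FPk_subset_FP[of k x] by (simp add: y_def FPk_def)
  have "FP y \<in> p"
    using Suc.IH by (simp add: y_def FPk_def)
  then have "{y 0} \<union> FPk 1 y \<union> (\<lambda>w. y 0 * w) ` FPk 1 y \<in> p"
    by (rule ultrafilter_mono[OF p(1) _ FP_subset_Un])
  moreover have "{y 0} \<notin> p"
    using p(2) unfolding nonprincipal_def by blast
  ultimately have "FPk 1 y \<in> p"
    using B[OF \<open>FP y \<subseteq> B\<close>] ultrafilter_UnD[OF p(1)] by metis
  then show ?case
    unfolding y_def FPk_shift .
qed

lemma FP_subset_left_translates_mem:
  assumes "is_ultrafilter p" "\<And>k. FPk k x \<in> p" "FP x \<subseteq> A"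
  shows "FP x \<subseteq> {s. {t. s * t \<in> A} \<in> p}"
proof
  fix y assume "y \<in> FP x"
  then obtain n where "(\<lambda>w. y * w) ` FPk n x \<subseteq> FP x"
    by (rule FP_mult_FPk_subset)
  then have "FPk n x \<subseteq> {t. y * t \<in> A}"
    using assms(3) by blast
  then show "y \<in> {s. {t. s * t \<in> A} \<in> p}"
    using ultrafilter_mono[OF assms(1) assms(2)] by blast
qed

theorem mainTheorem3:
  fixes p :: "'a::semigroup_mult set set"
  assumes "is_ultrafilter p"
    and "regular_sp p"
  shows "idempotent_uf p"
  unfolding idempotent_uf_def
proof
  fix A assume "A \<in> p"
  obtain B where "B \<in> p" and B: "\<And>y. FP y \<subseteq> B \<Longrightarrow> (\<lambda>w. y 0 * w) ` FPk 1 y \<notin> p"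
    using assms(2) unfolding regular_sp_def by blast
  have "A \<inter> B \<in> p"
    using assms(1) \<open>A \<in> p\<close> \<open>B \<in> p\<close> by (rule ultrafilter_Int)
  then obtain x where x: "FP x \<subseteq> A \<inter> B" "FP x \<in> p"
    using assms(2) unfolding regular_sp_def strongly_productive_def by blast
  have "nonprincipal p"
    using assms(2) unfolding regular_sp_def by blast
  then have "FPk k x \<in> p" for k
    using assms(1) x B by (intro FPk_mem_ultrafilter[where B = B]) auto
  then have "FP x \<subseteq> {s. {t. s * t \<in> A} \<in> p}"
    using assms(1) x(1) FP_subset_left_translates_mem by blast
  then show "{s. {t. s * t \<in> A} \<in> p} \<in> p"
    by (rule ultrafilter_mono[OF assms(1) x(2)])
qed

end
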